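(* For every $n\ge 1$, $|\mathcal{OCT}_n|=(n+1)2^{n-2}$.
   Context: $X_n=\{1,2,\dots,n\}$ with its usual order. A map $\alpha:X_n\to X_n$ is order-preserving if $x\le y$ implies $x\alpha\le y\alpha$, and a contraction if $|x\alpha-y\alpha|\le|x-y|$ for all $x,y$. $\mathcal{OCT}_n$ is the set (semigroup under composition) of all order-preserving contractions $X_n\to X_n$ defined on all of $X_n$. *)

theory Defs
  imports Complex_Main "HOL-Library.FuncSet"
begin

definition OCT :: "nat \<Rightarrow> (nat \<Rightarrow> nat) set" where
  "OCT n = {f \<in> {1..n} \<rightarrow>\<^sub>E {1..n}.
      (\<forall>x\<in>{1..n}. \<forall>y\<in>{1..n}. x \<le> y \<longrightarrow> f x \<le> f y) \<and>
      (\<forall>x\<in>{1..n}. \<forall>y\<in>{1..n}. \<bar>int (f x) - int (f y)\<bar> \<le> \<bar>int x - int y\<bar>)}"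

end

theory Submission
  imports Defs
begin

text \<open>Since consecutive points of \<open>X\<^sub>n\<close> are at distance 1, a map \<open>f \<in> OCT\<^sub>n\<close> satisfies
  \<open>f (j + 1) - f j \<in> {0, 1}\<close>. Hence \<open>f\<close> is determined by its value \<open>a = f 1\<close> and its set
  \<open>D \<subseteq> {1..<n}\<close> of jumps, via \<open>f i = a + |{j \<in> D. j < i}|\<close>, and these data are constrained
  only by \<open>1 \<le> a \<le> n - |D|\<close>. So \<open>|OCT\<^sub>n| = \<Sum>\<^sub>D (n - |D|)\<close> over all subsets \<open>D\<close> of an
  \<open>(n - 1)\<close>-set, and pairing each \<open>D\<close> with its complement evaluates the sum.\<close>

lemma sum_card_Pow:
  assumes "finite A"
  shows "2 * (\<Sum>D\<in>Pow A. card D) = card A * 2 ^ card A"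
proof -
  have "bij_betw (\<lambda>D. A - D) (Pow A) (Pow A)"
    by (rule bij_betw_byWitness[where f' = "\<lambda>D. A - D"]) auto
  then have "(\<Sum>D\<in>Pow A. card (A - D)) = (\<Sum>D\<in>Pow A. card D)"
    by (rule sum.reindex_bij_betw)
  moreover have "(\<Sum>D\<in>Pow A. card D + card (A - D)) = (\<Sum>D\<in>Pow A. card A)"
    using assms by (intro sum.cong) (auto simp: card_Diff_subset card_mono finite_subset)
  ultimately show ?thesis
    using assms by (simp add: sum.distrib card_Pow algebra_simps)
qed

lemma sum_card_Pow_complement:
  assumes "finite A"
  shows "2 * (\<Sum>D\<in>Pow A. Suc (card A) - card D) = (card A + 2) * 2 ^ card A"
proof -
  have "(\<Sum>D\<in>Pow A. Suc (card A) - card D) + (\<Sum>D\<in>Pow A. card D) = (\<Sum>D\<in>Pow A. Suc (card A))"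
    unfolding sum.distrib[symmetric]
    using assms by (intro sum.cong) (auto dest: card_mono)
  then show ?thesis
    using sum_card_Pow[OF assms] assms by (simp add: card_Pow algebra_simps)
qed

definition count_below :: "nat set \<Rightarrow> nat \<Rightarrow> nat" where
  "count_below D i = card {j\<in>D. j < i}"

lemma finite_count_below_set: "finite {j\<in>D. j < (i::nat)}"
  by (rule finite_subset[of _ "{..<i}"]) auto

lemma count_below_0 [simp]: "count_below D 0 = 0"
  by (simp add: count_below_def)

lemma count_below_Suc:
  "count_below D (Suc i) = count_below D i + (if i \<in> D then 1 else 0)"
proof -
  have "{j\<in>D. j < Suc i} = (if i \<in> D then insert i {j\<in>D. j < i} else {j\<in>D. j < i})"
    by (auto simp: less_Suc_eq)
  then show ?thesis
    unfolding count_below_def using finite_count_below_set by simp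
qed

lemma count_below_mono: "x \<le> y \<Longrightarrow> count_below D x \<le> count_below D y"
  unfolding count_below_def by (rule card_mono) (auto intro: finite_count_below_set)

lemma count_below_le_add_diff: "x \<le> y \<Longrightarrow> count_below D y \<le> count_below D x + (y - x)"
  by (induction y rule: dec_induct) (auto simp: count_below_Suc)

lemma count_below_contraction:
  "\<bar>int (count_below D x) - int (count_below D y)\<bar> \<le> \<bar>int x - int y\<bar>"
proof -
  have "\<bar>int (count_below D x) - int (count_below D y)\<bar> \<le> \<bar>int x - int y\<bar>"
    if "x \<le> y" for x y
    using count_below_mono[OF that, of D] count_below_le_add_diff[OF that, of D] that by linarith
  then show ?thesis
    by (metis abs_minus_commute nle_le)
qed

lemma count_below_le_card: "finite D \<Longrightarrow> count_below D i \<le> card D"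
  unfolding count_below_def by (rule card_mono) auto

lemma count_below_eq_card: "\<forall>j\<in>D. j < i \<Longrightarrow> count_below D i = card D"
  unfolding count_below_def by (metis (no_types, lifting) Collect_cong Collect_mem_eq)

definition step_map :: "nat \<Rightarrow> nat set \<Rightarrow> nat \<Rightarrow> nat \<Rightarrow> nat" where
  "step_map n D a = restrict (\<lambda>i. a + count_below D i) {1..n}"

lemma step_map_outside: "i \<notin> {1..n} \<Longrightarrow> step_map n D a i = undefined"
  unfolding step_map_def by (simp only: restrict_apply if_False)

definition jumps :: "nat \<Rightarrow> (nat \<Rightarrow> nat) \<Rightarrow> nat set" where
  "jumps n f = {j\<in>{1..<n}. f (Suc j) \<noteq> f j}"

definition OCT_params :: "nat \<Rightarrow> (nat set \<times> nat) set" where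
  "OCT_params n = (SIGMA D:Pow {1..<n}. {1..n - card D})"

lemma step_map_in_OCT:
  assumes "D \<subseteq> {1..<n}" "1 \<le> a" "a \<le> n - card D"
  shows "step_map n D a \<in> OCT n"
proof -
  have "card D \<le> n - 1"
    using card_mono[OF _ assms(1)] by simp
  then have "a + count_below D i \<le> n" for i
    using assms count_below_le_card[of D i] finite_subset[OF assms(1)] by fastforce
  then have "step_map n D a \<in> {1..n} \<rightarrow>\<^sub>E {1..n}"
    using assms(2) by (auto simp: step_map_def)
  moreover have "step_map n D a x \<le> step_map n D a y"
    if "x \<in> {1..n}" "y \<in> {1..n}" "x \<le> y" for x y
    using that count_below_mono by (simp add: step_map_def)
  moreover have "\<bar>int (step_map n D a x) - int (step_map n D a y)\<bar> \<le> \<bar>int x - int y\<bar>"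
    if "x \<in> {1..n}" "y \<in> {1..n}" for x y
    using that count_below_contraction[of D x y] by (simp add: step_map_def)
  ultimately show ?thesis
    unfolding OCT_def by blast
qed

lemma OCT_mono: "f \<in> OCT n \<Longrightarrow> x \<in> {1..n} \<Longrightarrow> y \<in> {1..n} \<Longrightarrow> x \<le> y \<Longrightarrow> f x \<le> f y"
  by (simp add: OCT_def)

lemma OCT_contraction:
  "f \<in> OCT n \<Longrightarrow> x \<in> {1..n} \<Longrightarrow> y \<in> {1..n} \<Longrightarrow> \<bar>int (f x) - int (f y)\<bar> \<le> \<bar>int x - int y\<bar>"
  by (simp add: OCT_def)

lemma OCT_Suc:
  assumes "f \<in> OCT n" "1 \<le> i" "i < n"
  shows "f (Suc i) = f i + (if i \<in> jumps n f then 1 else 0)"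
proof -
  have "f i \<le> f (Suc i)" "\<bar>int (f (Suc i)) - int (f i)\<bar> \<le> 1"
    using OCT_mono[OF assms(1), of i "Suc i"] OCT_contraction[OF assms(1), of "Suc i" i] assms(2,3)
    by simp_all
  then show ?thesis
    using assms by (auto simp: jumps_def split: if_splits)
qed

lemma OCT_eq_add_count_below_jumps:
  assumes "f \<in> OCT n" "1 \<le> i" "i \<le> n"
  shows "f i = f 1 + count_below (jumps n f) i"
  using assms(2,3)
proof (induction i rule: dec_induct)
  case base
  then show ?case by (simp add: count_below_def jumps_def)
next
  case (step i)
  then show ?case
    using OCT_Suc[OF assms(1) step.hyps(1)] by (simp add: count_below_Suc)
qed

lemma step_map_jumps:
  assumes "f \<in> OCT n"
  shows "step_map n (jumps n f) (f 1) = f"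
proof
  fix i
  show "step_map n (jumps n f) (f 1) i = f i"
  proof (cases "i \<in> {1..n}")
    case True
    then have "f i = f 1 + count_below (jumps n f) i"
      using OCT_eq_add_count_below_jumps[OF assms, of i] by simp
    with True show ?thesis
      by (simp add: step_map_def)
  next
    case False
    have "f \<in> {1..n} \<rightarrow>\<^sub>E {1..n}"
      using assms by (simp add: OCT_def)
    then have "f i = undefined"
      using False by (rule PiE_arb)
    then show ?thesis
      using step_map_outside[OF False] by (simp only:)
  qed
qed

lemma jumps_step_map:
  assumes "D \<subseteq> {1..<n}"
  shows "jumps n (step_map n D a) = D"
proof -
  have "j \<in> jumps n (step_map n D a) \<longleftrightarrow> j \<in> D" if "j \<in> {1..<n}" for j
  proof -
    have "step_map n D a (Suc j) = step_map n D a j + (if j \<in> D then 1 else 0)"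
      using that by (simp add: step_map_def count_below_Suc)
    then show ?thesis
      using that by (simp add: jumps_def)
  qed
  moreover have "jumps n g \<subseteq> {1..<n}" for g
    by (auto simp: jumps_def)
  ultimately show ?thesis
    using assms by blast
qed

lemma bij_betw_step_map_OCT:
  assumes "1 \<le> n"
  shows "bij_betw (\<lambda>(D, a). step_map n D a) (OCT_params n) (OCT n)"
proof (rule bij_betw_byWitness[where f' = "\<lambda>f. (jumps n f, f 1)"])
  show "\<forall>p\<in>OCT_params n. (\<lambda>f. (jumps n f, f 1)) ((\<lambda>(D, a). step_map n D a) p) = p"
    using assms by (auto simp: OCT_params_def jumps_step_map) (auto simp: step_map_def count_below_Suc)
  show "\<forall>f\<in>OCT n. (\<lambda>(D, a). step_map n D a) (jumps n f, f 1) = f"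
    using step_map_jumps by (simp only: prod.case) blast
  show "(\<lambda>(D, a). step_map n D a) ` OCT_params n \<subseteq> OCT n"
    by (clarsimp simp: OCT_params_def) (rule step_map_in_OCT; simp)
  have "jumps n f \<subseteq> {1..<n} \<and> 1 \<le> f 1 \<and> f 1 + card (jumps n f) \<le> n" if "f \<in> OCT n" for f
  proof -
    have "count_below (jumps n f) n = card (jumps n f)"
      by (rule count_below_eq_card) (auto simp: jumps_def)
    then have "f n = f 1 + card (jumps n f)"
      using OCT_eq_add_count_below_jumps[OF that, of n] assms by simp
    moreover have "f 1 \<in> {1..n}" "f n \<in> {1..n}"
      using that assms unfolding OCT_def by auto
    ultimately show ?thesis
      by (auto simp: jumps_def)
  qed
  then show "(\<lambda>f. (jumps n f, f 1)) ` OCT n \<subseteq> OCT_params n"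
    by (fastforce simp: OCT_params_def)
qed

lemma card_OCT_sum: "1 \<le> n \<Longrightarrow> card (OCT n) = (\<Sum>D\<in>Pow {1..<n}. n - card D)"
  using bij_betw_same_card[OF bij_betw_step_map_OCT]
  by (simp add: OCT_params_def)

theorem corollary2p10:
  fixes n :: nat
  assumes "n \<ge> 1"
  shows "real (card (OCT n)) = (real n + 1) * 2 powr (real n - 2)"
proof -
  obtain m where m: "n = Suc m"
    using assms by (cases n) auto
  have "2 * card (OCT n) = (n + 1) * 2 ^ m"
    using card_OCT_sum[OF assms] sum_card_Pow_complement[of "{1..<n}"] m by simp
  then have "2 * real (card (OCT n)) = (real n + 1) * 2 ^ m"
    by (metis of_nat_1 of_nat_add of_nat_mult of_nat_numeral of_nat_power)
  moreover have "2 powr (real n - 2) = 2 ^ m / 2"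
    using m by (simp add: powr_diff powr_realpow)
  ultimately show ?thesis
    by (simp only:)
qed

end
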